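(* Let $\Phi_1,\Phi_2$ be simple point processes on $\mathbb{R}^d$. If $\Phi_1$ has smaller void probabilities than $\Phi_2$, i.e. $\Pr\{\Phi_1(B)=0\}\le\Pr\{\Phi_2(B)=0\}$ for all bounded Borel $B$, then $\overline r_c(\Phi_1)\le\overline r_c(\Phi_2)$.
   Context: For $r>0$, $x\in\mathbb{R}^d$, let $Q^r=(-\frac{1}{2r},\frac{1}{2r}]^d$ and $Q^r(x)=x+Q^r$. For $n\in\mathbb{N}$, $\mathbb{L}^{*d}_n$ is the graph with vertex set $\mathbb{Z}^d_n=\frac1n\mathbb{Z}^d$ and edges $\langle z_i,z_j\rangle$ whenever $Q^{n/2}(z_i)\cap Q^{n/2}(z_j)\ne\emptyset$. A contour is a minimal collection of vertices of $\mathbb{L}^{*d}_n$ such that every infinite path in $\mathbb{L}^{*d}_n$ from the origin contains one of these vertices (minimal: removing any vertex yields an infinite path from the origin avoiding the remaining ones). $\Gamma_n$ is the set of all contours around the origin in $\mathbb{L}^{*d}_n$, and for $\gamma\subset\mathbb{R}^d$, $Q_\gamma=\bigcup_{z\in\gamma}Q^n(z)$. For a point process $\Phi$, $C(\Phi,r)=\bigcup_{X\in\Phi}B_X(r)$, and $\overline r_c(\Phi)=\inf\{r>0:\text{for all }n\ge1,\ \sum_{\gamma\in\Gamma_n}\Pr\{C(\Phi,r)\cap Q_\gamma=\emptyset\}<\infty\}$. *)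

theory Defs
  imports "HOL-Probability.Probability"
begin

text \<open>Points of R^d are vectors real^'d (the index type 'd has cardinality d).\<close>

definition cube :: "real \<Rightarrow> real^'d \<Rightarrow> (real^'d) set" where
  "cube r x = {y. \<forall>i. x$i - 1/(2*r) < y$i \<and> y$i \<le> x$i + 1/(2*r)}"

definition lattice :: "nat \<Rightarrow> (real^'d) set" where
  "lattice n = {z. \<forall>i. \<exists>k::int. z$i = of_int k / real n}"

definition lat_adj :: "nat \<Rightarrow> real^'d \<Rightarrow> real^'d \<Rightarrow> bool" where
  "lat_adj n z w \<longleftrightarrow> z \<in> lattice n \<and> w \<in> lattice n \<and> z \<noteq> w \<and>
     cube (real n / 2) z \<inter> cube (real n / 2) w \<noteq> {}"

definition inf_path :: "nat \<Rightarrow> (nat \<Rightarrow> real^'d) \<Rightarrow> bool" where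
  "inf_path n p \<longleftrightarrow> p 0 = 0 \<and> inj p \<and> (\<forall>k. lat_adj n (p k) (p (Suc k)))"

definition blocks :: "nat \<Rightarrow> (real^'d) set \<Rightarrow> bool" where
  "blocks n S \<longleftrightarrow> (\<forall>p. inf_path n p \<longrightarrow> (\<exists>k. p k \<in> S))"

definition contours :: "nat \<Rightarrow> (real^'d) set set" where
  "contours n = {\<gamma>. \<gamma> \<subseteq> lattice n \<and> blocks n \<gamma> \<and> (\<forall>z\<in>\<gamma>. \<not> blocks n (\<gamma> - {z}))}"

definition Qset :: "nat \<Rightarrow> (real^'d) set \<Rightarrow> (real^'d) set" where
  "Qset n \<gamma> = (\<Union>z\<in>\<gamma>. cube (real n) z)"

definition covered :: "(real^'d) set \<Rightarrow> real \<Rightarrow> (real^'d) set" where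
  "covered \<phi> r = (\<Union>X\<in>\<phi>. cball X r)"

definition simple_point_process :: "'w measure \<Rightarrow> ('w \<Rightarrow> (real^'d) set) \<Rightarrow> bool" where
  "simple_point_process M \<Phi> \<longleftrightarrow> prob_space M \<and>
     (\<forall>\<omega>\<in>space M. \<forall>B. bounded B \<longrightarrow> finite (\<Phi> \<omega> \<inter> B)) \<and>
     (\<forall>B\<in>sets borel. bounded B \<longrightarrow>
        (\<forall>k::nat. {\<omega>\<in>space M. card (\<Phi> \<omega> \<inter> B) = k} \<in> sets M))"

definition void_prob :: "'w measure \<Rightarrow> ('w \<Rightarrow> (real^'d) set) \<Rightarrow> (real^'d) set \<Rightarrow> real" where
  "void_prob M \<Phi> B = measure M {\<omega>\<in>space M. \<Phi> \<omega> \<inter> B = {}}"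

text \<open>overline r_c(Phi), extended-real valued (inf of the empty set is infinity)\<close>
definition rc_bar :: "'w measure \<Rightarrow> ('w \<Rightarrow> (real^'d) set) \<Rightarrow> ereal" where
  "rc_bar M \<Phi> = Inf (ereal ` {r. r > 0 \<and> (\<forall>n::nat. n \<ge> 1 \<longrightarrow>
      (\<lambda>\<gamma>. measure M {\<omega>\<in>space M. covered (\<Phi> \<omega>) r \<inter> Qset n \<gamma> = {}}) summable_on contours n)})"

end

theory Submission
  imports Defs
begin

text \<open>Both quantities defining \<open>rc_bar\<close> are void probabilities: \<open>C(\<Phi>, r)\<close> misses \<open>Q\<^sub>\<gamma>\<close>
  exactly when \<open>\<Phi>\<close> has no point in the closed \<open>r\<close>-neighbourhood \<open>C(Q\<^sub>\<gamma>, r)\<close>. This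
  neighbourhood is Borel (a countable union of compact boxes thickened by a ball), so smaller
  void probabilities make every series in the definition of \<open>rc_bar M\<^sub>1 \<Phi>\<^sub>1\<close> dominated by
  the corresponding series for \<open>\<Phi>\<^sub>2\<close>: the set of admissible radii can only grow, and its
  infimum can only drop. The comparison is assumed for bounded sets only; it extends to the
  unbounded neighbourhoods by continuity of measure along the truncations \<open>B \<inter> cball 0 k\<close>.\<close>

lemma covered_disjoint_iff: "covered A r \<inter> B = {} \<longleftrightarrow> A \<inter> covered B r = {}"
  unfolding covered_def disjoint_iff by (auto simp: dist_commute) (metis dist_commute)+

lemma covered_UN: "covered (\<Union>i\<in>I. A i) r = (\<Union>i\<in>I. covered (A i) r)"
  unfolding covered_def by blast

lemma closed_covered_compact:
  fixes C :: "(real^'d) set"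
  assumes "compact C"
  shows "closed (covered C r)"
proof -
  have "cball q r = (+) q ` cball 0 r" for q :: "real^'d"
    using cball_translation[of q 0 r] by simp
  then have "covered C r = (\<Union>q\<in>C. \<Union>y\<in>cball 0 r. {q + y})"
    unfolding covered_def by blast
  then show ?thesis
    using compact_closed_sums[OF assms closed_cball] by simp
qed

lemma cube_eq_UN_cbox:
  "cube r x = (\<Union>k. cbox (\<chi> i. x$i - 1/(2*r) + inverse (real (Suc k))) (\<chi> i. x$i + 1/(2*r)))"
proof (intro set_eqI iffI)
  fix y assume y: "y \<in> cube r x"
  have "\<forall>\<^sub>F k in sequentially. \<forall>i. inverse (real (Suc k)) < y$i - (x$i - 1/(2*r))"
  proof (rule eventually_all_finite)
    fix i
    have "0 < y$i - (x$i - 1/(2*r))" using y unfolding cube_def by auto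
    then show "\<forall>\<^sub>F k in sequentially. inverse (real (Suc k)) < y$i - (x$i - 1/(2*r))"
      using order_tendstoD(2)[OF LIMSEQ_inverse_real_of_nat] by blast
  qed
  then obtain k where k: "\<forall>i. inverse (real (Suc k)) < y$i - (x$i - 1/(2*r))"
    unfolding eventually_sequentially by blast
  have "x$i - 1/(2*r) + inverse (real (Suc k)) \<le> y$i \<and> y$i \<le> x$i + 1/(2*r)" for i
    using k y unfolding cube_def by (smt (verit) mem_Collect_eq)
  then have "y \<in> cbox (\<chi> i. x$i - 1/(2*r) + inverse (real (Suc k))) (\<chi> i. x$i + 1/(2*r))"
    by (simp add: mem_box_cart)
  then show "y \<in> (\<Union>k. cbox (\<chi> i. x$i - 1/(2*r) + inverse (real (Suc k))) (\<chi> i. x$i + 1/(2*r)))"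
    by blast
next
  fix y assume "y \<in> (\<Union>k. cbox (\<chi> i. x$i - 1/(2*r) + inverse (real (Suc k))) (\<chi> i. x$i + 1/(2*r)))"
  then obtain k where k: "\<forall>i. x$i - 1/(2*r) + inverse (real (Suc k)) \<le> y$i \<and> y$i \<le> x$i + 1/(2*r)"
    by (auto simp: mem_box_cart)
  have "0 < inverse (real (Suc k))" by simp
  then show "y \<in> cube r x"
    using k unfolding cube_def by (smt (verit) mem_Collect_eq)
qed

lemma covered_cube_borel: "covered (cube s x) r \<in> sets borel"
  unfolding cube_eq_UN_cbox covered_UN
  by (intro sets.countable_UN image_subsetI borel_closed closed_covered_compact compact_cbox)

lemma countable_lattice: "countable (lattice n :: (real^'d) set)"
proof -
  have "lattice n \<subseteq> range (\<lambda>f::'d \<Rightarrow> int. \<chi> i. of_int (f i) / real n)"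
  proof
    fix z :: "real^'d" assume "z \<in> lattice n"
    then have "\<forall>i. \<exists>k::int. z$i = of_int k / real n"
      unfolding lattice_def by blast
    then obtain f where "\<And>i. z$i = of_int (f i) / real n"
      by metis
    then have "z = (\<chi> i. of_int (f i) / real n)" by (simp add: vec_eq_iff)
    then show "z \<in> range (\<lambda>f::'d \<Rightarrow> int. \<chi> i. of_int (f i) / real n)" by blast
  qed
  then show ?thesis by (rule countable_subset) simp
qed

lemma covered_Qset_borel:
  fixes \<gamma> :: "(real^'d) set"
  assumes "\<gamma> \<subseteq> lattice n"
  shows "covered (Qset n \<gamma>) r \<in> sets borel"
proof -
  have "countable \<gamma>" using assms countable_lattice countable_subset by blast
  then show ?thesis
    unfolding Qset_def covered_UN by (rule sets.countable_UN'') (auto intro: covered_cube_borel)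
qed

lemma void_events_eq_INT_truncations:
  fixes \<Phi> :: "'w \<Rightarrow> 'a::real_normed_vector set"
  shows "{\<omega>\<in>space M. \<Phi> \<omega> \<inter> B = {}} = (\<Inter>k. {\<omega>\<in>space M. \<Phi> \<omega> \<inter> (B \<inter> cball 0 (real k)) = {}})"
proof -
  have "(\<Union>k. B \<inter> cball 0 (real k)) = B"
    using real_arch_simple by (fastforce simp: dist_norm)
  then show ?thesis by blast
qed

lemma void_event_sets_bounded:
  assumes "simple_point_process M \<Phi>" "B \<in> sets borel" "bounded B"
  shows "{\<omega>\<in>space M. \<Phi> \<omega> \<inter> B = {}} \<in> sets M"
proof -
  have "finite (\<Phi> \<omega> \<inter> B)" if "\<omega> \<in> space M" for \<omega>
    using assms(1,3) that unfolding simple_point_process_def by blast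
  then have "{\<omega>\<in>space M. \<Phi> \<omega> \<inter> B = {}} = {\<omega>\<in>space M. card (\<Phi> \<omega> \<inter> B) = 0}"
    by auto
  also have "\<dots> \<in> sets M"
    using assms(1,2,3) unfolding simple_point_process_def by blast
  finally show ?thesis .
qed

lemma void_event_sets:
  assumes "simple_point_process M \<Phi>" "B \<in> sets borel"
  shows "{\<omega>\<in>space M. \<Phi> \<omega> \<inter> B = {}} \<in> sets M"
  unfolding void_events_eq_INT_truncations[of M \<Phi> B]
  using assms by (intro sets.countable_INT image_subsetI void_event_sets_bounded) auto

lemma void_prob_truncations_tendsto:
  assumes "simple_point_process M \<Phi>" "B \<in> sets borel"
  shows "(\<lambda>k. void_prob M \<Phi> (B \<inter> cball 0 (real k))) \<longlonglongrightarrow> void_prob M \<Phi> B"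
proof -
  have "finite_measure M"
    using assms(1) unfolding simple_point_process_def prob_space_def by blast
  moreover have "range (\<lambda>k. {\<omega>\<in>space M. \<Phi> \<omega> \<inter> (B \<inter> cball 0 (real k)) = {}}) \<subseteq> sets M"
    using assms by (auto intro!: void_event_sets)
  moreover have "decseq (\<lambda>k. {\<omega>\<in>space M. \<Phi> \<omega> \<inter> (B \<inter> cball 0 (real k)) = {}})"
    by (rule decseq_SucI) (auto simp: subset_iff)
  ultimately show ?thesis
    unfolding void_prob_def void_events_eq_INT_truncations[of M \<Phi> B]
    by (rule finite_measure.finite_Lim_measure_decseq)
qed

lemma void_prob_mono_borel:
  assumes "simple_point_process M1 \<Phi>1" "simple_point_process M2 \<Phi>2"
    and "\<forall>B\<in>sets borel. bounded B \<longrightarrow> void_prob M1 \<Phi>1 B \<le> void_prob M2 \<Phi>2 B"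
    and "B \<in> sets borel"
  shows "void_prob M1 \<Phi>1 B \<le> void_prob M2 \<Phi>2 B"
proof (rule LIMSEQ_le[OF void_prob_truncations_tendsto void_prob_truncations_tendsto])
  have "void_prob M1 \<Phi>1 (B \<inter> cball 0 (real k)) \<le> void_prob M2 \<Phi>2 (B \<inter> cball 0 (real k))" for k
  proof -
    have "B \<inter> cball 0 (real k) \<in> sets borel" "bounded (B \<inter> cball 0 (real k))"
      using assms(4) by auto
    then show ?thesis using assms(3) by blast
  qed
  then show "\<exists>N. \<forall>k\<ge>N. void_prob M1 \<Phi>1 (B \<inter> cball 0 (real k)) \<le> void_prob M2 \<Phi>2 (B \<inter> cball 0 (real k))"
    by blast
qed (use assms in auto)

lemma uncovered_prob_eq_void_prob:
  "measure M {\<omega>\<in>space M. covered (\<Phi> \<omega>) r \<inter> Q = {}} = void_prob M \<Phi> (covered Q r)"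
  unfolding void_prob_def covered_disjoint_iff ..

theorem corollary6p2:
  fixes M1 :: "'w1 measure" and \<Phi>1 :: "'w1 \<Rightarrow> (real^'d) set"
    and M2 :: "'w2 measure" and \<Phi>2 :: "'w2 \<Rightarrow> (real^'d) set"
  assumes "simple_point_process M1 \<Phi>1"
    and "simple_point_process M2 \<Phi>2"
    and "\<forall>B\<in>sets borel. bounded B \<longrightarrow> void_prob M1 \<Phi>1 B \<le> void_prob M2 \<Phi>2 B"
  shows "rc_bar M1 \<Phi>1 \<le> rc_bar M2 \<Phi>2"
proof -
  have dominated: "measure M1 {\<omega>\<in>space M1. covered (\<Phi>1 \<omega>) r \<inter> Qset n \<gamma> = {}}
      \<le> measure M2 {\<omega>\<in>space M2. covered (\<Phi>2 \<omega>) r \<inter> Qset n \<gamma> = {}}"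
    if "\<gamma> \<in> contours n" for r n \<gamma>
    using that unfolding uncovered_prob_eq_void_prob contours_def
    by (intro void_prob_mono_borel[OF assms] covered_Qset_borel) auto
  have summable: "(\<lambda>\<gamma>. measure M1 {\<omega>\<in>space M1. covered (\<Phi>1 \<omega>) r \<inter> Qset n \<gamma> = {}}) summable_on contours n"
    if "(\<lambda>\<gamma>. measure M2 {\<omega>\<in>space M2. covered (\<Phi>2 \<omega>) r \<inter> Qset n \<gamma> = {}}) summable_on contours n"
    for r n
    using summable_on_comparison_test[OF that dominated] by simp
  have "{r. r > 0 \<and> (\<forall>n::nat. n \<ge> 1 \<longrightarrow>
        (\<lambda>\<gamma>. measure M2 {\<omega>\<in>space M2. covered (\<Phi>2 \<omega>) r \<inter> Qset n \<gamma> = {}}) summable_on contours n)}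
      \<subseteq> {r. r > 0 \<and> (\<forall>n::nat. n \<ge> 1 \<longrightarrow>
        (\<lambda>\<gamma>. measure M1 {\<omega>\<in>space M1. covered (\<Phi>1 \<omega>) r \<inter> Qset n \<gamma> = {}}) summable_on contours n)}"
    using summable by blast
  then show ?thesis
    unfolding rc_bar_def by (intro Inf_superset_mono image_mono)
qed

end
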